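(* Let $P$ be a rooted forest on $[n]$ with natural labeling, and for $1\le i\le n$ define $\hat\partial_i$ on $\mathcal{L}(P)$ by $\pi\hat\partial_i=\pi\partial_{\pi^{-1}_i}$. Then for $\pi\in\mathcal{L}(P)$, $\pi\hat\partial_i$ is the linear extension obtained from $\pi$ by moving the letter $i$ to position $n$ and reordering the letters $j\succeq i$ (which form a chain) among the positions they then occupy so that the result is a linear extension of $P$.
   Context: A rooted forest is a disjoint union of rooted trees, a rooted tree being a connected finite poset in which each element is covered by at most one element. $\mathcal{L}(P)=\{\pi\in S_n : i\prec j \Rightarrow \pi^{-1}_i<\pi^{-1}_j\}$ in one-line notation $\pi=\pi_1\cdots\pi_n$. $\pi\tau_i$ ($1\le i<n$) swaps $\pi_i,\pi_{i+1}$ if they are incomparable and is $\pi$ otherwise; operators act on the right; $\partial_j=\tau_j\tau_{j+1}\cdots\tau_{n-1}$. *)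

theory Defs
  imports Main
begin

text \<open>A poset on the ground set {1..n} is given by a relation le (read: le x y means x is below-or-equal y).
  Permutations are lists in one-line notation; list index k (0-based) is position k+1.\<close>

definition prec :: "(nat \<Rightarrow> nat \<Rightarrow> bool) \<Rightarrow> nat \<Rightarrow> nat \<Rightarrow> bool" where
  "prec le x y \<longleftrightarrow> le x y \<and> x \<noteq> y"

definition poset_on :: "nat \<Rightarrow> (nat \<Rightarrow> nat \<Rightarrow> bool) \<Rightarrow> bool" where
  "poset_on n le \<longleftrightarrow>
     (\<forall>x\<in>{1..n}. le x x) \<and>
     (\<forall>x\<in>{1..n}. \<forall>y\<in>{1..n}. le x y \<and> le y x \<longrightarrow> x = y) \<and>
     (\<forall>x\<in>{1..n}. \<forall>y\<in>{1..n}. \<forall>z\<in>{1..n}. le x y \<and> le y z \<longrightarrow> le x z)"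

definition covered_by :: "nat \<Rightarrow> (nat \<Rightarrow> nat \<Rightarrow> bool) \<Rightarrow> nat \<Rightarrow> nat \<Rightarrow> bool" where
  "covered_by n le x y \<longleftrightarrow> prec le x y \<and> \<not> (\<exists>z\<in>{1..n}. prec le x z \<and> prec le z y)"

text \<open>Rooted forest: a finite poset in which each element is covered by at most one element
  (equivalently, a disjoint union of rooted trees).\<close>
definition rooted_forest :: "nat \<Rightarrow> (nat \<Rightarrow> nat \<Rightarrow> bool) \<Rightarrow> bool" where
  "rooted_forest n le \<longleftrightarrow> poset_on n le \<and>
     (\<forall>x\<in>{1..n}. \<forall>y\<in>{1..n}. \<forall>z\<in>{1..n}.
        covered_by n le x y \<and> covered_by n le x z \<longrightarrow> y = z)"

definition natural_labeling :: "nat \<Rightarrow> (nat \<Rightarrow> nat \<Rightarrow> bool) \<Rightarrow> bool" where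
  "natural_labeling n le \<longleftrightarrow> (\<forall>x\<in>{1..n}. \<forall>y\<in>{1..n}. prec le x y \<longrightarrow> x < y)"

definition pos :: "nat list \<Rightarrow> nat \<Rightarrow> nat" where
  "pos \<pi> x = (LEAST k. k < length \<pi> \<and> \<pi> ! k = x) + 1"

definition letter :: "nat list \<Rightarrow> nat \<Rightarrow> nat" where
  "letter \<pi> k = \<pi> ! (k - 1)"

definition is_perm :: "nat \<Rightarrow> nat list \<Rightarrow> bool" where
  "is_perm n \<pi> \<longleftrightarrow> length \<pi> = n \<and> distinct \<pi> \<and> set \<pi> = {1..n}"

definition lin_ext :: "nat \<Rightarrow> (nat \<Rightarrow> nat \<Rightarrow> bool) \<Rightarrow> nat list set" where
  "lin_ext n le = {\<pi>. is_perm n \<pi> \<and>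
     (\<forall>x\<in>{1..n}. \<forall>y\<in>{1..n}. prec le x y \<longrightarrow> pos \<pi> x < pos \<pi> y)}"

definition incomparable :: "(nat \<Rightarrow> nat \<Rightarrow> bool) \<Rightarrow> nat \<Rightarrow> nat \<Rightarrow> bool" where
  "incomparable le x y \<longleftrightarrow> \<not> le x y \<and> \<not> le y x"

definition tau :: "(nat \<Rightarrow> nat \<Rightarrow> bool) \<Rightarrow> nat list \<Rightarrow> nat \<Rightarrow> nat list" where
  "tau le \<pi> i =
     (if 1 \<le> i \<and> i < length \<pi> \<and> incomparable le (letter \<pi> i) (letter \<pi> (i+1))
      then \<pi>[i - 1 := letter \<pi> (i+1), i := letter \<pi> i]
      else \<pi>)"

text \<open>\<pi>\<partial>_j = \<pi>\<tau>_j\<tau>_{j+1}...\<tau>_{n-1}, operators acting on the right (\<tau>_j applied first)\<close>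
definition dpart :: "(nat \<Rightarrow> nat \<Rightarrow> bool) \<Rightarrow> nat list \<Rightarrow> nat \<Rightarrow> nat list" where
  "dpart le \<pi> j = foldl (tau le) \<pi> [j..<length \<pi>]"

definition dhat :: "(nat \<Rightarrow> nat \<Rightarrow> bool) \<Rightarrow> nat list \<Rightarrow> nat \<Rightarrow> nat list" where
  "dhat le \<pi> i = dpart le \<pi> (pos \<pi> i)"

end

theory Submission
  imports Defs
begin

text \<open>Writing \<pi> = A i B, the operators \<tau>_j with j \<ge> pos \<pi> i carry a letter rightwards through B:
  it is swapped past incomparable letters, and when it meets a comparable letter (necessarily
  above it, \<pi> being a linear extension) that letter is carried on instead. The carried letter
  therefore always lies above i, so every letter not above i only shifts one place left, landing
  exactly where it sits in \<pi> with i moved to the end. The result has no letter below an earlier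
  one, i.e. it is a linear extension; and in a naturally labelled rooted forest the letters above i
  form a chain, because each element has a unique upper cover with a larger label.\<close>

fun bubble :: "(nat \<Rightarrow> nat \<Rightarrow> bool) \<Rightarrow> nat \<Rightarrow> nat list \<Rightarrow> nat list" where
  "bubble le c [] = [c]"
| "bubble le c (y # ys) =
     (if incomparable le c y then y # bubble le c ys else c # bubble le y ys)"

lemma set_bubble [simp]: "set (bubble le c ys) = insert c (set ys)"
  by (induction ys arbitrary: c) auto

lemma length_bubble [simp]: "length (bubble le c ys) = Suc (length ys)"
  by (induction ys arbitrary: c) auto

lemma distinct_bubble [simp]: "distinct (bubble le c ys) = distinct (c # ys)"
  by (induction ys arbitrary: c) auto

lemma tau_append_Cons_Cons:
  "tau le (A @ c # y # ys) (Suc (length A)) =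
     A @ (if incomparable le c y then y # c # ys else c # y # ys)"
  by (simp add: tau_def letter_def nth_append list_update_append)

lemma foldl_tau_eq_bubble:
  "foldl (tau le) (A @ c # ys) [Suc (length A)..<length (A @ c # ys)] = A @ bubble le c ys"
proof (induction ys arbitrary: A c)
  case Nil
  then show ?case by simp
next
  case (Cons y ys)
  have upt: "[Suc (length A)..<length (A @ c # y # ys)] =
      Suc (length A) # [Suc (Suc (length A))..<length (A @ c # y # ys)]"
    by (rule upt_conv_Cons) simp
  obtain c' y' where swap: "tau le (A @ c # y # ys) (Suc (length A)) = (A @ [c']) @ y' # ys"
    and bub: "bubble le c (y # ys) = c' # bubble le y' ys"
    by (cases "incomparable le c y") (simp_all add: tau_append_Cons_Cons)
  have "foldl (tau le) (A @ c # y # ys) [Suc (length A)..<length (A @ c # y # ys)] =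
      foldl (tau le) ((A @ [c']) @ y' # ys) [Suc (length (A @ [c']))..<length ((A @ [c']) @ y' # ys)]"
    by (simp only: upt foldl_Cons swap) simp
  also have "\<dots> = A @ bubble le c (y # ys)"
    unfolding Cons.IH bub by simp
  finally show ?case .
qed

lemma sorted_bubble:
  "sorted_wrt (\<lambda>a b. \<not> le b a) (c # ys) \<Longrightarrow> sorted_wrt (\<lambda>a b. \<not> le b a) (bubble le c ys)"
  by (induction ys arbitrary: c) (auto simp: incomparable_def)

lemma nth_bubble_fixed:
  assumes trans: "\<And>x y z. x \<in> S \<Longrightarrow> y \<in> S \<Longrightarrow> z \<in> S \<Longrightarrow> le x y \<Longrightarrow> le y z \<Longrightarrow> le x z"
    and "i \<in> S" "set (c # ys) \<subseteq> S" "le i c"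
    and "sorted_wrt (\<lambda>a b. \<not> le b a) (c # ys)"
    and "j < Suc (length ys)" "\<not> le i ((ys @ [c]) ! j)"
  shows "bubble le c ys ! j = (ys @ [c]) ! j"
  using assms(3-)
proof (induction ys arbitrary: c j)
  case Nil
  then show ?case by simp
next
  case (Cons y ys)
  note prems = Cons.prems
  have "c \<in> S" "y \<in> S"
    using prems(1) by simp_all
  then have i_le_y: "le i y" if "le c y"
    using trans[OF \<open>i \<in> S\<close>] prems(2) that by blast
  show ?case
  proof (cases j)
    case 0
    with prems i_le_y show ?thesis
      by (auto simp: incomparable_def)
  next
    case (Suc j')
    show ?thesis
    proof (cases "incomparable le c y")
      case True
      have "bubble le c ys ! j' = (ys @ [c]) ! j'"
        by (rule Cons.IH) (use prems Suc in auto)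
      with True Suc show ?thesis by simp
    next
      case False
      then have "le i y"
        using prems(3) i_le_y by (simp add: incomparable_def)
      have "j' < length ys"
        using prems(2,4,5) Suc by (auto simp: nth_append less_Suc_eq)
      then have "bubble le y ys ! j' = (ys @ [y]) ! j'"
        by (intro Cons.IH) (use prems Suc \<open>le i y\<close> in \<open>auto simp: nth_append\<close>)
      with False Suc \<open>j' < length ys\<close> show ?thesis
        by (simp add: nth_append)
    qed
  qed
qed

lemma nth_append_bubble_fixed:
  assumes trans: "\<And>x y z. x \<in> S \<Longrightarrow> y \<in> S \<Longrightarrow> z \<in> S \<Longrightarrow> le x y \<Longrightarrow> le y z \<Longrightarrow> le x z"
    and "i \<in> S" "set (c # ys) \<subseteq> S" "le i c"
    and "sorted_wrt (\<lambda>a b. \<not> le b a) (c # ys)"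
    and "j < length (A @ ys @ [c])" "\<not> le i ((A @ ys @ [c]) ! j)"
  shows "(A @ bubble le c ys) ! j = (A @ ys @ [c]) ! j"
proof (cases "j < length A")
  case True
  then show ?thesis by (simp add: nth_append)
next
  case False
  with assms(6,7) have "bubble le c ys ! (j - length A) = (ys @ [c]) ! (j - length A)"
    by (intro nth_bubble_fixed[OF trans assms(2-5)]) (auto simp: nth_append)
  with False show ?thesis
    by (simp add: nth_append)
qed

lemma pos_nth:
  assumes "distinct xs" "k < length xs"
  shows "pos xs (xs ! k) = Suc k"
proof -
  have "(LEAST m. m < length xs \<and> xs ! m = xs ! k) = k"
    by (rule Least_equality) (use assms nth_eq_iff_index_eq in \<open>auto simp: not_le\<close>)
  then show ?thesis by (simp add: pos_def)
qed

lemma lin_ext_iff_sorted: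
  "\<pi> \<in> lin_ext n le \<longleftrightarrow> is_perm n \<pi> \<and> sorted_wrt (\<lambda>a b. \<not> le b a) \<pi>"
proof (cases "is_perm n \<pi>")
  case True
  then have d: "distinct \<pi>" and s: "set \<pi> = {1..n}"
    by (auto simp: is_perm_def)
  have "(\<forall>x\<in>set \<pi>. \<forall>y\<in>set \<pi>. prec le x y \<longrightarrow> pos \<pi> x < pos \<pi> y) \<longleftrightarrow>
      (\<forall>j k. j < k \<longrightarrow> k < length \<pi> \<longrightarrow> \<not> le (\<pi> ! k) (\<pi> ! j))"
  proof safe
    fix j k
    assume L: "\<forall>x\<in>set \<pi>. \<forall>y\<in>set \<pi>. prec le x y \<longrightarrow> pos \<pi> x < pos \<pi> y"
      and jk: "j < k" "k < length \<pi>" and "le (\<pi> ! k) (\<pi> ! j)"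
    then have "prec le (\<pi> ! k) (\<pi> ! j)"
      using nth_eq_iff_index_eq[OF d] by (auto simp: prec_def)
    with L jk have "pos \<pi> (\<pi> ! k) < pos \<pi> (\<pi> ! j)"
      by simp
    with jk show False
      by (simp add: pos_nth[OF d])
  next
    fix x y
    assume S: "\<forall>j k. j < k \<longrightarrow> k < length \<pi> \<longrightarrow> \<not> le (\<pi> ! k) (\<pi> ! j)"
      and "x \<in> set \<pi>" "y \<in> set \<pi>" "prec le x y"
    then obtain j k where jk: "j < length \<pi>" "k < length \<pi>" "x = \<pi> ! j" "y = \<pi> ! k"
      and "le (\<pi> ! j) (\<pi> ! k)" "j \<noteq> k"
      by (auto simp: in_set_conv_nth prec_def)
    with S have "j < k"
      by (meson linorder_neqE_nat)
    with jk show "pos \<pi> x < pos \<pi> y"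
      by (simp add: pos_nth[OF d])
  qed
  with True s show ?thesis
    by (simp add: lin_ext_def sorted_wrt_iff_nth_less)
qed (simp add: lin_ext_def)

lemma dhat_eq_bubble:
  assumes "distinct (A @ i # ys)"
  shows "dhat le (A @ i # ys) i = A @ bubble le i ys"
proof -
  have "pos (A @ i # ys) i = Suc (length A)"
    using pos_nth[OF assms, of "length A"] by simp
  then show ?thesis
    unfolding dhat_def dpart_def by (simp only: foldl_tau_eq_bubble)
qed

lemma lin_ext_append_bubble:
  assumes "A @ c # ys \<in> lin_ext n le"
  shows "A @ bubble le c ys \<in> lin_ext n le"
proof -
  have "is_perm n (A @ c # ys)" and sorted: "sorted_wrt (\<lambda>a b. \<not> le b a) (A @ c # ys)"
    using assms by (simp_all add: lin_ext_iff_sorted)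
  then have "is_perm n (A @ bubble le c ys)"
    by (auto simp: is_perm_def)
  moreover have "sorted_wrt (\<lambda>a b. \<not> le b a) (A @ bubble le c ys)"
    using sorted sorted_bubble[of le c ys] by (auto simp: sorted_wrt_append)
  ultimately show ?thesis
    by (simp add: lin_ext_iff_sorted)
qed

lemma lin_ext_dhat:
  assumes "\<pi> \<in> lin_ext n le" "i \<in> {1..n}"
  shows "dhat le \<pi> i \<in> lin_ext n le"
proof -
  have perm: "is_perm n \<pi>"
    using assms(1) by (simp add: lin_ext_iff_sorted)
  with assms(2) obtain A B where \<pi>: "\<pi> = A @ i # B"
    by (metis is_perm_def split_list)
  with perm have "dhat le \<pi> i = A @ bubble le i B"
    by (simp add: dhat_eq_bubble is_perm_def)
  with assms(1) show ?thesis
    unfolding \<pi> by (simp add: lin_ext_append_bubble)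
qed

lemma poset_on_refl:
  assumes "poset_on n le" "x \<in> {1..n}"
  shows "le x x"
proof -
  have "\<forall>x\<in>{1..n}. le x x"
    using assms(1) unfolding poset_on_def by (elim conjE)
  with assms(2) show ?thesis by blast
qed

lemma poset_on_trans:
  assumes "poset_on n le" "x \<in> {1..n}" "y \<in> {1..n}" "z \<in> {1..n}" "le x y" "le y z"
  shows "le x z"
proof -
  have "\<forall>x\<in>{1..n}. \<forall>y\<in>{1..n}. \<forall>z\<in>{1..n}. le x y \<and> le y z \<longrightarrow> le x z"
    using assms(1) unfolding poset_on_def by (elim conjE)
  with assms(2-) show ?thesis by blast
qed

lemma letter_dhat_fixed:
  assumes po: "poset_on n le" and "\<pi> \<in> lin_ext n le" "i \<in> {1..n}" "k \<in> {1..n}"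
    and "\<not> le i (letter (removeAll i \<pi> @ [i]) k)"
  shows "letter (dhat le \<pi> i) k = letter (removeAll i \<pi> @ [i]) k"
proof -
  have perm: "is_perm n \<pi>" and sorted: "sorted_wrt (\<lambda>a b. \<not> le b a) \<pi>"
    using assms(2) by (simp_all add: lin_ext_iff_sorted)
  with assms(3) obtain A B where \<pi>: "\<pi> = A @ i # B"
    by (metis is_perm_def split_list)
  with perm have distinct: "distinct (A @ i # B)" and set: "set (A @ i # B) = {1..n}"
    and len: "length (A @ B @ [i]) = n"
    by (simp_all add: is_perm_def)
  have \<rho>: "dhat le \<pi> i = A @ bubble le i B" and \<sigma>: "removeAll i \<pi> @ [i] = A @ B @ [i]"
    using \<pi> distinct by (simp_all add: dhat_eq_bubble)
  have "set (i # B) \<subseteq> {1..n}"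
    unfolding set[symmetric] by auto
  moreover have "k - 1 < length (A @ B @ [i])"
    using assms(4) len by auto
  moreover have "sorted_wrt (\<lambda>a b. \<not> le b a) (i # B)"
    using sorted \<pi> by (simp add: sorted_wrt_append)
  ultimately show ?thesis
    using assms(5) unfolding letter_def \<rho> \<sigma>
    by (intro nth_append_bubble_fixed[where S = "{1..n}" and le = le and i = i and c = i,
          OF poset_on_trans[OF po] assms(3) _ poset_on_refl[OF po assms(3)]]) simp_all
qed

lemma is_perm_move_to_end:
  assumes "is_perm n \<pi>" "i \<in> set \<pi>"
  shows "is_perm n (removeAll i \<pi> @ [i])"
proof -
  have d: "distinct \<pi>" and s: "set \<pi> = {1..n}" and l: "length \<pi> = n"
    using assms(1) by (simp_all add: is_perm_def)
  have "length (removeAll i \<pi>) = length \<pi> - 1"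
    using d assms(2) by (simp add: distinct_remove1_removeAll[symmetric] length_remove1)
  moreover have "length \<pi> > 0"
    using assms(2) by (cases \<pi>) simp_all
  moreover have "set (removeAll i \<pi> @ [i]) = set \<pi>"
    using assms(2) by auto
  ultimately show ?thesis
    using d s l by (simp add: is_perm_def distinct_removeAll)
qed

lemma letter_in_range:
  assumes "is_perm n \<sigma>" "k \<in> {1..n}"
  shows "letter \<sigma> k \<in> {1..n}"
proof -
  have "k - 1 < length \<sigma>"
    using assms by (auto simp: is_perm_def)
  then have "letter \<sigma> k \<in> set \<sigma>"
    unfolding letter_def by (rule nth_mem)
  with assms(1) show ?thesis
    by (simp add: is_perm_def)
qed

lemma natural_labeling_less:
  "natural_labeling n le \<Longrightarrow> x \<in> {1..n} \<Longrightarrow> y \<in> {1..n} \<Longrightarrow> prec le x y \<Longrightarrow> x < y"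
  by (simp add: natural_labeling_def)

lemma rooted_forest_cover_unique:
  assumes "rooted_forest n le" "x \<in> {1..n}" "y \<in> {1..n}" "z \<in> {1..n}"
    and "covered_by n le x y" "covered_by n le x z"
  shows "y = z"
proof -
  have "\<forall>x\<in>{1..n}. \<forall>y\<in>{1..n}. \<forall>z\<in>{1..n}.
      covered_by n le x y \<and> covered_by n le x z \<longrightarrow> y = z"
    using assms(1) unfolding rooted_forest_def by (elim conjE)
  with assms(2-) show ?thesis by blast
qed

lemma covered_by_below:
  assumes po: "poset_on n le" and nat: "natural_labeling n le"
    and xy: "x \<in> {1..n}" "y \<in> {1..n}" "prec le x y"
  obtains z where "z \<in> {1..n}" "covered_by n le x z" "le z y"
proof -
  let ?P = "\<lambda>z. z \<in> {1..n} \<and> prec le x z \<and> le z y"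
  define z where "z = (LEAST z. ?P z)"
  have Pz: "?P z"
    unfolding z_def by (intro LeastI[of ?P y]) (use xy poset_on_refl[OF po] in simp)
  have "covered_by n le x z"
    unfolding covered_by_def
  proof (intro conjI notI)
    show "prec le x z" using Pz by simp
  next
    assume "\<exists>w\<in>{1..n}. prec le x w \<and> prec le w z"
    then obtain w where w: "w \<in> {1..n}" "prec le x w" "prec le w z" by blast
    have "le w y"
      using Pz w(3) xy(2) by (intro poset_on_trans[OF po w(1), of z y]) (simp_all add: prec_def)
    with w have "z \<le> w"
      unfolding z_def by (intro Least_le) simp
    moreover have "w < z"
      using natural_labeling_less[OF nat w(1) _ w(3)] Pz by simp
    ultimately show False by simp
  qed
  with Pz that show ?thesis by blast
qed

lemma rooted_forest_upset_chain:
  assumes rf: "rooted_forest n le" and nat: "natural_labeling n le" and "i \<in> {1..n}"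
    and "a \<in> {1..n}" "b \<in> {1..n}" "le i a" "le i b"
  shows "le a b \<or> le b a"
  using assms(3-)
proof (induction "n - i" arbitrary: i rule: less_induct)
  case less
  have po: "poset_on n le"
    using rf by (simp add: rooted_forest_def)
  show ?case
  proof (cases "a = i \<or> b = i")
    case True
    with less.prems show ?thesis by auto
  next
    case False
    with less.prems have "prec le i a" "prec le i b" by (auto simp: prec_def)
    \<comment> \<open>both a and b lie above the unique upper cover of i, whose label is larger\<close>
    obtain z where z: "z \<in> {1..n}" "covered_by n le i z" "le z a"
      using covered_by_below[OF po nat less.prems(1,2) \<open>prec le i a\<close>] .
    obtain z' where z': "z' \<in> {1..n}" "covered_by n le i z'" "le z' b"
      using covered_by_below[OF po nat less.prems(1,3) \<open>prec le i b\<close>] .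
    have "z' = z"
      using rooted_forest_cover_unique[OF rf less.prems(1) z'(1) z(1) z'(2) z(2)] .
    have "i < z"
      using natural_labeling_less[OF nat less.prems(1) z(1)] z(2) by (simp add: covered_by_def)
    then have "n - z < n - i"
      using z(1) by auto
    with z z' \<open>z' = z\<close> less.prems(2,3) show ?thesis
      by (intro less.hyps) simp_all
  qed
qed

theorem lemma6p5:
  fixes n :: nat and le :: "nat \<Rightarrow> nat \<Rightarrow> bool" and \<pi> :: "nat list" and i :: nat
  assumes "rooted_forest n le" and "natural_labeling n le"
    and "\<pi> \<in> lin_ext n le" and "i \<in> {1..n}"
  shows "let C = {j \<in> {1..n}. le i j};
             \<sigma> = removeAll i \<pi> @ [i];
             \<rho> = dhat le \<pi> i
         in (\<forall>a\<in>C. \<forall>b\<in>C. le a b \<or> le b a) \<and>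
            \<rho> \<in> lin_ext n le \<and>
            (\<forall>k\<in>{1..n}. letter \<sigma> k \<notin> C \<longrightarrow> letter \<rho> k = letter \<sigma> k)"
proof -
  have po: "poset_on n le"
    using assms(1) by (simp add: rooted_forest_def)
  have "is_perm n \<pi>"
    using assms(3) by (simp add: lin_ext_iff_sorted)
  moreover from this have "i \<in> set \<pi>"
    using assms(4) by (simp add: is_perm_def)
  ultimately have perm: "is_perm n (removeAll i \<pi> @ [i])"
    by (rule is_perm_move_to_end)
  show ?thesis
    unfolding Let_def
  proof (intro conjI ballI impI)
    fix a b assume "a \<in> {j \<in> {1..n}. le i j}" "b \<in> {j \<in> {1..n}. le i j}"
    then show "le a b \<or> le b a"
      using rooted_forest_upset_chain[OF assms(1,2,4)] by simp
  next
    show "dhat le \<pi> i \<in> lin_ext n le"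
      using assms(3,4) by (rule lin_ext_dhat)
  next
    fix k assume "k \<in> {1..n}" "letter (removeAll i \<pi> @ [i]) k \<notin> {j \<in> {1..n}. le i j}"
    then show "letter (dhat le \<pi> i) k = letter (removeAll i \<pi> @ [i]) k"
      using letter_in_range[OF perm] letter_dhat_fixed[OF po assms(3,4)] by simp
  qed
qed

end
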